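(* Let $A$ be an algorithm that, given any input of $N$ elements of which at least $\frac34 N$ are relevant, outputs a relevant element with probability at least $1-c^{-N}$, for some constant $c>1$, and let $T(N)$ be its running time. Then for every $k$ there exists an algorithm that solves FT-Retrieval$(k)$ on $n$ elements with high probability in time $O\left(\frac{n}{k}\log n\right) + T(m)$ for some $m=\Theta(\log n)$.
   Context: FT-Retrieval$(k)$: the input is a collection $S$ of $n$ elements, $k$ of which are relevant. Information can only be obtained by querying an oracle with an element $x$; it reports whether $x$ is relevant, and each answer is wrong with probability at most $p$, where $p\in[0,\tfrac12)$ is a fixed constant, independently of all other answers (repeated queries are also independent). Each query takes $O(1)$ time. The goal is to output a relevant element; solving it with high probability means succeeding with probability at least $1-\frac1n$ on every input. Inputs may be multisets (copies treated as distinct elements). *)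

theory Defs
  imports "HOL-Probability.Probability"
begin

text \<open>The input consists of n elements, identified by
their positions 0..n-1 (so copies in a multiset are distinct).  An algorithm is a finite
decision tree: it may query the noisy oracle about an element, draw a uniformly random
number from {0..<m} (unit cost, word-RAM style), or return an element.\<close>

datatype alg =
    Ret nat
  | Query nat "bool \<Rightarrow> alg"
  | Rand nat "nat \<Rightarrow> alg"

text \<open>Output distribution. R is the set of relevant positions, err x \<in> [0,p] is the
probability that a query on x is answered wrongly (independently for every query).
Rand 0 is treated as Rand 1.\<close>

primrec run :: "nat set \<Rightarrow> (nat \<Rightarrow> real) \<Rightarrow> alg \<Rightarrow> nat pmf" where
  "run R err (Ret i) = return_pmf i"
| "run R err (Query x f) =
     bind_pmf (bernoulli_pmf (err x))
       (\<lambda>wrong. run R err (f (if wrong then x \<notin> R else x \<in> R)))"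
| "run R err (Rand m f) =
     bind_pmf (pmf_of_set {..<max 1 m}) (\<lambda>j. run R err (f j))"

primrec time :: "alg \<Rightarrow> nat" where
  "time (Ret i) = 0"
| "time (Query x f) = Suc (max (time (f True)) (time (f False)))"
| "time (Rand m f) = Suc (Max ((\<lambda>j. time (f j)) ` {..<max 1 m}))"

definition valid_noise :: "real \<Rightarrow> (nat \<Rightarrow> real) \<Rightarrow> bool" where
  "valid_noise p err \<longleftrightarrow> (\<forall>x. 0 \<le> err x \<and> err x \<le> p)"

definition succ_prob :: "nat set \<Rightarrow> (nat \<Rightarrow> real) \<Rightarrow> alg \<Rightarrow> real" where
  "succ_prob R err B = measure_pmf.prob (run R err B) R"

end

theory Submission
  imports Defs
begin

text \<open>A single relevant element is found by a restarting counter walk: query a uniformly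
  random candidate repeatedly, moving a counter up on each positive and down on each negative
  answer; restart with a fresh candidate when the counter drops to \<open>0\<close> and output the
  candidate when it reaches a threshold \<open>H \<approx> a n/k\<close>. Since \<open>p < 1/2\<close>, the counter of a
  relevant candidate drifts upwards and that of an irrelevant one downwards. By gambler's ruin,
  a restart ends with an irrelevant output with probability at most \<open>\<rho>\<^bsup>H-1\<^esup>\<close>,
  \<open>\<rho> = 1/(2(1-p))\<close>, and as a relevant candidate turns up after about \<open>n/k\<close> restarts, the
  threshold makes the total error small; the expected running time is \<open>O(n/k)\<close>, so by
  Markov's inequality a budget of \<open>O(n/k)\<close> queries yields a
  relevant element with probability at least \<open>31/32\<close>.

  Repeating the walk \<open>m = \<Theta>(log n)\<close> times gives a list in which more than a quarter of the
  entries are irrelevant only with probability \<open>(3/4)\<^sup>m\<close>: the exponential moment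
  \<open>E 16\<^sup>X\<close> of the number \<open>X\<close> of irrelevant samples grows by a factor at most \<open>3/2\<close> per sample.
  On every other list, \<open>A\<close> run on the sublist errs with probability at most \<open>c\<^sup>-\<^sup>m\<close>.\<close>

section \<open>Query algorithms\<close>

lemma measure_pmf_prob_bind_pmf:
  "measure_pmf.prob (bind_pmf M f) X = (\<integral>x. measure_pmf.prob (f x) X \<partial>M)"
proof -
  have "ennreal (measure_pmf.prob (bind_pmf M f) X) = (\<integral>\<^sup>+x. emeasure (f x) X \<partial>M)"
    by (simp add: measure_pmf.emeasure_eq_measure[symmetric])
  also have "\<dots> = ennreal (\<integral>x. measure_pmf.prob (f x) X \<partial>M)"
    by (simp add: measure_pmf.emeasure_eq_measure)
       (rule nn_integral_eq_integral, auto intro!: measure_pmf.integrable_const_bound[where B=1])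
  finally show ?thesis
    by (simp add: integral_nonneg)
qed

lemma succ_prob_nonneg: "0 \<le> succ_prob R err B"
  by (simp add: succ_prob_def)

lemma succ_prob_le_1: "succ_prob R err B \<le> 1"
  by (simp add: succ_prob_def)

lemma succ_prob_Ret: "succ_prob R err (Ret i) = (if i \<in> R then 1 else 0)"
  by (simp add: succ_prob_def)

lemma succ_prob_Query:
  assumes "0 \<le> err x" "err x \<le> 1"
  shows "succ_prob R err (Query x f) =
     err x * succ_prob R err (f (x \<notin> R)) + (1 - err x) * succ_prob R err (f (x \<in> R))"
  using assms by (simp add: succ_prob_def measure_pmf_prob_bind_pmf)

lemma succ_prob_Rand:
  "succ_prob R err (Rand m f) = (\<Sum>j<max 1 m. succ_prob R err (f j)) / real (max 1 m)"
proof -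
  have "{..<max 1 m} \<noteq> {}" by (auto simp: lessThan_empty_iff)
  then show ?thesis
    by (simp add: succ_prob_def measure_pmf_prob_bind_pmf integral_pmf_of_set)
qed

lemma time_Rand_le:
  assumes "\<And>j. j < max 1 m \<Longrightarrow> time (f j) \<le> T"
  shows "time (Rand m f) \<le> Suc T"
proof -
  have "{..<max 1 m} \<noteq> {}" by (auto simp: lessThan_empty_iff)
  then show ?thesis using assms by (simp add: Max_le_iff)
qed

lemma time_Rand_mono:
  assumes "\<And>j. j < max 1 m \<Longrightarrow> time (f j) \<le> time (g j) + T"
  shows "time (Rand m f) \<le> time (Rand m g) + T"
proof -
  have "time (f j) \<le> Max ((\<lambda>j. time (g j)) ` {..<max 1 m}) + T" if "j < max 1 m" for j
  proof -
    have "time (g j) \<le> Max ((\<lambda>j. time (g j)) ` {..<max 1 m})"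
      using that by (intro Max_ge) auto
    then show ?thesis
      using assms[OF that] by linarith
  qed
  then show ?thesis
    using time_Rand_le by fastforce
qed

primrec alg_bind :: "alg \<Rightarrow> (nat \<Rightarrow> alg) \<Rightarrow> alg" where
  "alg_bind (Ret i) g = g i"
| "alg_bind (Query x f) g = Query x (\<lambda>b. alg_bind (f b) g)"
| "alg_bind (Rand m f) g = Rand m (\<lambda>j. alg_bind (f j) g)"

lemma run_alg_bind: "run R err (alg_bind t g) = bind_pmf (run R err t) (\<lambda>i. run R err (g i))"
  by (induction t) (auto simp: bind_assoc_pmf bind_return_pmf)

lemma succ_prob_alg_bind:
  "succ_prob R err (alg_bind t g) = measure_pmf.expectation (run R err t) (\<lambda>i. succ_prob R err (g i))"
  by (simp add: succ_prob_def run_alg_bind measure_pmf_prob_bind_pmf)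

lemma time_alg_bind_le:
  assumes "\<And>i. time (g i) \<le> T"
  shows "time (alg_bind t g) \<le> time t + T"
proof (induction t)
  case (Query x f)
  have "time (alg_bind (f b) g) \<le> time (f b) + T" for b
    using Query by simp
  from this[of True] this[of False] show ?case by (auto simp: max_def)
next
  case (Rand m f)
  have "time (Rand m (\<lambda>j. alg_bind (f j) g)) \<le> time (Rand m f) + T"
    by (rule time_Rand_mono) (use Rand in auto)
  then show ?case by (simp only: alg_bind.simps)
qed (use assms in auto)

text \<open>\<open>relabel cs t\<close> runs \<open>t\<close> on the sub-instance listed by \<open>cs\<close>: position \<open>i\<close> stands for
  \<open>cs ! i\<close>. Positions beyond the list are irrelevant and noiseless in the sub-instance,
  so queries to them are answered without consulting the oracle.\<close>

primrec relabel :: "nat list \<Rightarrow> alg \<Rightarrow> alg" where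
  "relabel cs (Ret i) = Ret (if i < length cs then cs ! i else 0)"
| "relabel cs (Query x f) =
     (if x < length cs then Query (cs ! x) (\<lambda>b. relabel cs (f b)) else relabel cs (f False))"
| "relabel cs (Rand m f) = Rand m (\<lambda>j. relabel cs (f j))"

lemma time_relabel_le: "time (relabel cs t) \<le> time t"
proof (induction t)
  case (Query x f)
  have "time (relabel cs (f b)) \<le> time (f b)" for b
    using Query by simp
  from this[of True] this[of False] show ?case
    by (auto simp: max_def)
next
  case (Rand m f)
  have "time (Rand m (\<lambda>j. relabel cs (f j))) \<le> time (Rand m f) + 0"
    by (rule time_Rand_mono) (use Rand in auto)
  then show ?case by simp
qed simp

lemma run_relabel:
  "run R err (relabel cs t) = map_pmf (\<lambda>i. if i < length cs then cs ! i else 0)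
     (run {i. i < length cs \<and> cs ! i \<in> R} (\<lambda>i. if i < length cs then err (cs ! i) else 0) t)"
proof (induction t)
  case (Query x f)
  have "bernoulli_pmf 0 = return_pmf False"
    by (rule pmf_eqI) (simp add: pmf_return split: split_indicator)
  then show ?case
    using Query by (simp add: map_bind_pmf bind_return_pmf cong: if_cong)
qed (simp_all add: map_bind_pmf)

lemma succ_prob_relabel_ge:
  "succ_prob {i. i < length cs \<and> cs ! i \<in> R} (\<lambda>i. if i < length cs then err (cs ! i) else 0) t
    \<le> succ_prob R err (relabel cs t)"
  unfolding succ_prob_def run_relabel
  by (auto intro!: measure_pmf.finite_measure_mono)

primrec collect_samples :: "alg \<Rightarrow> (nat list \<Rightarrow> alg) \<Rightarrow> nat \<Rightarrow> nat list \<Rightarrow> alg" where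
  "collect_samples T F 0 xs = F xs"
| "collect_samples T F (Suc j) xs = alg_bind T (\<lambda>x. collect_samples T F j (xs @ [x]))"

lemma time_collect_samples:
  assumes "\<And>ys. time (F ys) \<le> T\<^sub>F"
  shows "time (collect_samples T F j xs) \<le> j * time T + T\<^sub>F"
proof (induction j arbitrary: xs)
  case (Suc j)
  then show ?case
    using time_alg_bind_le[of "\<lambda>x. collect_samples T F j (xs @ [x])" "j * time T + T\<^sub>F" T]
    by simp
qed (simp add: assms)

section \<open>The counter walk\<close>

text \<open>Exhausting the budget \<open>b\<close> returns \<open>n\<close>, which is never relevant.\<close>

primrec counter_walk :: "nat \<Rightarrow> nat \<Rightarrow> nat \<Rightarrow> nat \<Rightarrow> nat \<Rightarrow> alg" where
  "counter_walk n H 0 x pos = Ret n"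
| "counter_walk n H (Suc b) x pos =
     (if pos = 0 then Rand n (\<lambda>y. counter_walk n H b y 1)
      else Query x (\<lambda>yes. if yes \<and> Suc pos = H then Ret x
                          else counter_walk n H b x (if yes then Suc pos else pos - 1)))"

lemma time_counter_walk: "time (counter_walk n H b x pos) \<le> b"
proof (induction b arbitrary: x pos)
  case (Suc b)
  have "time (Rand n (\<lambda>y. counter_walk n H b y 1)) \<le> Suc b"
    by (rule time_Rand_le) (rule Suc.IH)
  with Suc.IH show ?case by simp
qed simp

lemma sum_lessThan_if_mem:
  assumes "R \<subseteq> {..<n}"
  shows "(\<Sum>y<n. if y \<in> R then a else b) = real (card R) * a + real (n - card R) * (b::real)"
proof -
  have "(\<Sum>y<n. if y \<in> R then a else b) = (\<Sum>y\<in>R. a) + (\<Sum>y\<in>{..<n} - R. b)"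
    using assms by (simp add: sum.If_cases Int_absorb1 Diff_eq)
  moreover have "card ({..<n} - R) = n - card R"
    using assms by (simp add: card_Diff_subset finite_subset)
  ultimately show ?thesis by simp
qed

lemma convex_bound_step:
  fixes u F1 F0 P1 P0 W1 W0 P W b :: real
  assumes "0 \<le> u" "u \<le> 1" "0 < b"
    and "F1 \<le> P1 + W1 / b" "F0 \<le> P0 + W0 / b"
    and "u * P1 + (1 - u) * P0 \<le> P" "u * W1 + (1 - u) * W0 \<le> W - 1"
  shows "u * F1 + (1 - u) * F0 \<le> P + (W - 1) / b"
proof -
  have "u * F1 + (1 - u) * F0 \<le> u * (P1 + W1 / b) + (1 - u) * (P0 + W0 / b)"
    using assms by (intro add_mono mult_left_mono) auto
  also have "\<dots> = (u * P1 + (1 - u) * P0) + (u * W1 + (1 - u) * W0) / b"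
    using assms(3) by (simp add: field_simps)
  also have "\<dots> \<le> P + (W - 1) / b"
    using assms by (intro add_mono divide_right_mono) auto
  finally show ?thesis .
qed

lemma of_nat_mult_power_le:
  fixes r :: real
  assumes "0 \<le> r" "2 * r \<le> 1" "0 < t"
  shows "real t * r^t \<le> r"
proof -
  obtain s where t: "t = Suc s" using assms(3) by (cases t) auto
  have "real (Suc s) * r^(Suc s) \<le> r"
  proof (induction s)
    case (Suc s)
    have "real (Suc (Suc s)) * r^(Suc (Suc s)) \<le> r * (2 * (real (Suc s) * r^(Suc s)))"
      using assms(1) by (simp add: algebra_simps mult_left_mono)
    also have "\<dots> \<le> r * (2 * r)"
      using Suc assms(1) by (intro mult_left_mono) auto
    also have "\<dots> \<le> r"
      using assms by (simp add: mult_left_le)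
    finally show ?case .
  qed simp
  then show ?thesis by (simp add: t)
qed

locale noise_bound =
  fixes p :: real
  assumes p_nonneg: "0 \<le> p" and p_less: "p < 1/2"
begin

definition "\<rho> = 1 / (2 * (1 - p))"

definition "\<kappa> = 1 / (1 - 2 * p)"

lemma rho_pos: "0 < \<rho>"
  using p_less by (simp add: \<rho>_def)

lemma rho_less_1: "\<rho> < 1"
  using p_less by (simp add: \<rho>_def)

lemma kappa_ge_1: "1 \<le> \<kappa>"
  using p_nonneg p_less by (simp add: \<kappa>_def)

lemma kappa_drift: "0 \<le> e \<Longrightarrow> e \<le> p \<Longrightarrow> 1 \<le> \<kappa> * (1 - 2 * e)"
  using p_less kappa_ge_1 by (simp add: \<kappa>_def divide_simps)

text \<open>\<open>\<rho>\<^sup>d\<close> is a supermartingale for a walk that moves towards \<open>d = 0\<close> with probability at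
  most \<open>e \<le> p\<close>; the reason is \<open>4p(1 - p) \<le> 1\<close>.\<close>

lemma rho_drift:
  assumes "0 \<le> e" "e \<le> p"
  shows "e * \<rho>^d + (1 - e) * \<rho>^(d + 2) \<le> \<rho>^(d + 1)"
proof -
  have "(1 - p) * \<rho>^2 = (2 * (1 - p) * \<rho>) * \<rho> / 2"
    by (simp add: power2_eq_square)
  also have "2 * (1 - p) * \<rho> = 1"
    using p_less by (simp add: \<rho>_def)
  finally have half: "(1 - p) * \<rho>^2 = \<rho> / 2"
    by simp
  have "4 * p * (1 - p) \<le> 1"
    using zero_le_power2[of "1 - 2 * p"] by (simp add: power2_eq_square algebra_simps)
  then have "p \<le> \<rho> / 2"
    using p_less by (simp add: \<rho>_def field_simps)
  moreover have "e * (1 - \<rho>^2) \<le> p * (1 - \<rho>^2)"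
    using assms rho_pos rho_less_1 by (intro mult_right_mono) (auto simp: power_le_one)
  ultimately have "e + (1 - e) * \<rho>^2 \<le> \<rho>"
    using half by (simp add: algebra_simps)
  then have "\<rho>^d * (e + (1 - e) * \<rho>^2) \<le> \<rho>^d * \<rho>"
    using rho_pos by (intro mult_left_mono) auto
  then show ?thesis by (simp add: algebra_simps power_add power2_eq_square)
qed

end

locale counter_walk_analysis = noise_bound p for p +
  fixes n H :: nat and R :: "nat set" and err :: "nat \<Rightarrow> real"
  assumes R_subset: "R \<subseteq> {..<n}" and R_nonempty: "R \<noteq> {}"
    and noise: "valid_noise p err" and H_ge_2: "2 \<le> H"
begin

lemma card_R_pos: "0 < card R"
  using R_subset R_nonempty finite_subset by (auto simp: card_gt_0_iff)

lemma card_R_le: "card R \<le> n"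
  using card_mono[OF finite_lessThan R_subset] by simp

lemma n_pos: "0 < n"
  using card_R_pos card_R_le by linarith

lemma err_bounds: "0 \<le> err x" "err x \<le> p" "err x \<le> 1"
  using noise p_less by (auto simp: valid_noise_def dest: spec[of _ x])

text \<open>\<open>\<phi>\<^sub>0\<close> and \<open>w\<^sub>0\<close> are the potentials at a restart, chosen so that sampling a fresh
  candidate, relevant with probability \<open>card R / n\<close>, does not increase them on average.\<close>

definition "\<phi>\<^sub>0 = real n * \<rho>^(H - 1) / (real (card R) * (1 - \<rho>))"

definition "w\<^sub>0 = (real n * (1 + \<kappa>) + real (card R) * \<kappa> * real H) / (real (card R) * (1 - \<rho>))"

text \<open>For a candidate \<open>x\<close> with counter \<open>0 < pos < H\<close>, \<open>ruin x pos\<close> bounds the probability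
  that the walk eventually outputs an irrelevant element and \<open>duration x pos\<close> the expected
  number of remaining steps. \<open>\<Phi>\<close> and \<open>\<Psi>\<close> agree with them except at \<open>pos = 0\<close>, where a
  fresh candidate is about to be sampled.\<close>

definition "ruin x pos = (if x \<in> R then \<phi>\<^sub>0 * \<rho>^pos else \<phi>\<^sub>0 + \<rho>^(H - pos))"

definition "duration x pos =
  (if x \<in> R then \<kappa> * real (H - pos) + w\<^sub>0 * \<rho>^pos else w\<^sub>0 + \<kappa> * real pos)"

definition "\<Phi> x pos = (if pos = 0 then \<phi>\<^sub>0 else ruin x pos)"

definition "\<Psi> x pos = (if pos = 0 then w\<^sub>0 else duration x pos)"

definition "yes_prob x = (if x \<in> R then 1 - err x else err x)"

lemma Phi_0: "\<Phi> x 0 = \<phi>\<^sub>0"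
  by (simp add: \<Phi>_def)

lemma Psi_0: "\<Psi> x 0 = w\<^sub>0"
  by (simp add: \<Psi>_def)

lemma yes_prob_bounds: "0 \<le> yes_prob x" "yes_prob x \<le> 1"
  using err_bounds[of x] by (auto simp: yes_prob_def)

lemma succ_prob_Query_yes:
  "succ_prob R err (Query x f) =
     yes_prob x * succ_prob R err (f True) + (1 - yes_prob x) * succ_prob R err (f False)"
  using err_bounds[of x] by (cases "x \<in> R") (simp_all add: succ_prob_Query yes_prob_def)

lemma card_R_phi0: "real (card R) * \<phi>\<^sub>0 * (1 - \<rho>) = real n * \<rho>^(H - 1)"
  using rho_less_1 card_R_pos by (simp add: \<phi>\<^sub>0_def)

lemma card_R_w0: "real (card R) * w\<^sub>0 * (1 - \<rho>) = real n * (1 + \<kappa>) + real (card R) * \<kappa> * real H"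
  using rho_less_1 card_R_pos by (simp add: w\<^sub>0_def)

lemma phi0_nonneg: "0 \<le> \<phi>\<^sub>0"
  using rho_pos rho_less_1 by (simp add: \<phi>\<^sub>0_def)

lemma w0_ge_1: "1 \<le> w\<^sub>0"
proof -
  have "real (card R) * (1 - \<rho>) \<le> real (card R)"
    using rho_pos by (simp add: mult_left_le)
  also have "\<dots> \<le> real n"
    using card_R_le by simp
  also have "\<dots> \<le> real n * (1 + \<kappa>) + real (card R) * \<kappa> * real H"
  proof -
    have "0 \<le> real n * \<kappa>" "0 \<le> real (card R) * \<kappa> * real H"
      using kappa_ge_1 by (auto intro!: mult_nonneg_nonneg)
    then show ?thesis by (simp add: distrib_left)
  qed
  finally show ?thesis
    using rho_less_1 card_R_pos by (simp add: w\<^sub>0_def)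
qed

lemma Phi_nonneg: "0 \<le> \<Phi> x pos"
  using phi0_nonneg rho_pos by (simp add: \<Phi>_def ruin_def)

lemma Psi_nonneg: "0 \<le> \<Psi> x pos"
  using w0_ge_1 rho_pos kappa_ge_1 by (simp add: \<Psi>_def duration_def)

lemma Psi_ge_1:
  assumes "pos < H"
  shows "1 \<le> \<Psi> x pos"
proof -
  have "1 * 1 \<le> \<kappa> * (real H - real pos)"
    using assms kappa_ge_1 by (intro mult_mono) auto
  then show ?thesis
    using assms w0_ge_1 rho_pos kappa_ge_1 by (auto simp: \<Psi>_def duration_def add_increasing2)
qed

lemma Phi_le_ruin: "\<Phi> x pos \<le> ruin x pos"
  using phi0_nonneg rho_pos by (simp add: \<Phi>_def ruin_def)

lemma Psi_le_duration: "\<Psi> x pos \<le> duration x pos"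
  using w0_ge_1 kappa_ge_1 by (simp add: \<Psi>_def duration_def)

lemma fail_Ret_le_Phi_top: "1 - succ_prob R err (Ret x) \<le> \<Phi> x H"
  using H_ge_2 phi0_nonneg rho_pos by (simp add: \<Phi>_def ruin_def succ_prob_Ret)

lemma ruin_step:
  assumes "0 < pos" "pos < H"
  shows "yes_prob x * ruin x (Suc pos) + (1 - yes_prob x) * ruin x (pos - 1) \<le> ruin x pos"
proof (cases "x \<in> R")
  case True
  obtain q where q: "pos = Suc q" using assms by (cases pos) auto
  have "\<phi>\<^sub>0 * (err x * \<rho>^q + (1 - err x) * \<rho>^(q + 2)) \<le> \<phi>\<^sub>0 * \<rho>^(q + 1)"
    using rho_drift err_bounds phi0_nonneg by (intro mult_left_mono) auto
  then show ?thesis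
    using True q by (simp add: yes_prob_def ruin_def algebra_simps)
next
  case False
  obtain q where q: "pos = Suc q" using assms by (cases pos) auto
  define d where "d = H - Suc pos"
  have "H - q = d + 2" "H - Suc q = d + 1"
    using assms q by (simp_all add: d_def)
  then have "ruin x (Suc pos) = \<phi>\<^sub>0 + \<rho>^d"
    and "ruin x (pos - 1) = \<phi>\<^sub>0 + \<rho>^(d + 2)"
    and "ruin x pos = \<phi>\<^sub>0 + \<rho>^(d + 1)"
    using False q by (simp_all add: ruin_def d_def)
  then show ?thesis
    using False rho_drift[OF err_bounds(1,2), of x d] by (simp add: yes_prob_def algebra_simps)
qed

lemma duration_step:
  assumes "0 < pos" "pos < H"
  shows "yes_prob x * duration x (Suc pos) + (1 - yes_prob x) * duration x (pos - 1)
    \<le> duration x pos - 1"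
proof (cases "x \<in> R")
  case True
  obtain q where q: "pos = Suc q" using assms by (cases pos) auto
  define h where "h = real (H - pos)"
  define e where "e = err x"
  have up: "duration x (Suc pos) = \<kappa> * (h - 1) + w\<^sub>0 * \<rho>^(q + 2)"
    and down: "duration x (pos - 1) = \<kappa> * (h + 1) + w\<^sub>0 * \<rho>^q"
    and here: "duration x pos = \<kappa> * h + w\<^sub>0 * \<rho>^(q + 1)"
    using True q assms by (simp_all add: duration_def h_def of_nat_diff)
  have "yes_prob x * duration x (Suc pos) + (1 - yes_prob x) * duration x (pos - 1)
      = \<kappa> * h - \<kappa> * (1 - 2 * e) + w\<^sub>0 * (e * \<rho>^q + (1 - e) * \<rho>^(q + 2))"
    unfolding up down using True by (simp add: yes_prob_def e_def algebra_simps)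
  also have "\<dots> \<le> \<kappa> * h - 1 + w\<^sub>0 * \<rho>^(q + 1)"
    using kappa_drift[OF err_bounds(1,2)] rho_drift[OF err_bounds(1,2)] w0_ge_1 kappa_ge_1
    by (intro add_mono diff_mono mult_left_mono) (auto simp: e_def)
  finally show ?thesis
    unfolding here by simp
next
  case False
  have up: "duration x (Suc pos) = w\<^sub>0 + \<kappa> * real pos + \<kappa>"
    and down: "duration x (pos - 1) = w\<^sub>0 + \<kappa> * real pos - \<kappa>"
    using False assms by (simp_all add: duration_def of_nat_diff algebra_simps)
  have "yes_prob x * duration x (Suc pos) + (1 - yes_prob x) * duration x (pos - 1)
      = w\<^sub>0 + \<kappa> * real pos - \<kappa> * (1 - 2 * err x)"
    unfolding up down using False by (simp add: yes_prob_def algebra_simps)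
  then show ?thesis
    using False kappa_drift[OF err_bounds(1,2), of x] by (simp add: duration_def)
qed

lemma Phi_step:
  assumes "0 < pos" "pos < H"
  shows "yes_prob x * \<Phi> x (Suc pos) + (1 - yes_prob x) * \<Phi> x (pos - 1) \<le> \<Phi> x pos"
proof -
  have "yes_prob x * \<Phi> x (Suc pos) + (1 - yes_prob x) * \<Phi> x (pos - 1)
      \<le> yes_prob x * ruin x (Suc pos) + (1 - yes_prob x) * ruin x (pos - 1)"
    using yes_prob_bounds Phi_le_ruin by (intro add_mono mult_left_mono) auto
  also have "\<dots> \<le> \<Phi> x pos"
    using ruin_step[OF assms] assms by (simp add: \<Phi>_def)
  finally show ?thesis .
qed

lemma Psi_step:
  assumes "0 < pos" "pos < H"
  shows "yes_prob x * \<Psi> x (Suc pos) + (1 - yes_prob x) * \<Psi> x (pos - 1) \<le> \<Psi> x pos - 1"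
proof -
  have "yes_prob x * \<Psi> x (Suc pos) + (1 - yes_prob x) * \<Psi> x (pos - 1)
      \<le> yes_prob x * duration x (Suc pos) + (1 - yes_prob x) * duration x (pos - 1)"
    using yes_prob_bounds Psi_le_duration by (intro add_mono mult_left_mono) auto
  also have "\<dots> \<le> \<Psi> x pos - 1"
    using duration_step[OF assms] assms by (simp add: \<Psi>_def)
  finally show ?thesis .
qed

lemma sum_Phi_restart: "(\<Sum>y<n. \<Phi> y 1) \<le> real n * \<phi>\<^sub>0"
proof -
  have "(\<Sum>y<n. \<Phi> y 1) = real (card R) * (\<phi>\<^sub>0 * \<rho>) + real (n - card R) * (\<phi>\<^sub>0 + \<rho>^(H - 1))"
    using sum_lessThan_if_mem[OF R_subset] by (simp add: \<Phi>_def ruin_def)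
  also have "\<dots> = real n * \<phi>\<^sub>0 - (real (card R) * \<phi>\<^sub>0 * (1 - \<rho>) - real (n - card R) * \<rho>^(H - 1))"
    using card_R_le by (simp add: of_nat_diff algebra_simps)
  also have "\<dots> = real n * \<phi>\<^sub>0 - (real n * \<rho>^(H - 1) - real (n - card R) * \<rho>^(H - 1))"
    by (simp only: card_R_phi0)
  also have "\<dots> = real n * \<phi>\<^sub>0 - real (card R) * \<rho>^(H - 1)"
    using card_R_le by (simp add: of_nat_diff algebra_simps)
  also have "\<dots> \<le> real n * \<phi>\<^sub>0"
    using rho_pos by simp
  finally show ?thesis .
qed

lemma sum_Psi_restart: "(\<Sum>y<n. \<Psi> y 1) \<le> real n * (w\<^sub>0 - 1)"
proof -
  have "(\<Sum>y<n. \<Psi> y 1) =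
      real (card R) * (\<kappa> * (real H - 1) + w\<^sub>0 * \<rho>) + real (n - card R) * (w\<^sub>0 + \<kappa>)"
    using sum_lessThan_if_mem[OF R_subset] H_ge_2 by (simp add: \<Psi>_def duration_def of_nat_diff)
  also have "\<dots> = real n * (w\<^sub>0 - 1)
      - (real (card R) * w\<^sub>0 * (1 - \<rho>) - real n * (1 + \<kappa>) - real (card R) * \<kappa> * real H)
      - 2 * real (card R) * \<kappa>"
    using card_R_le by (simp add: of_nat_diff algebra_simps)
  also have "\<dots> \<le> real n * (w\<^sub>0 - 1)"
    using kappa_ge_1 by (simp add: card_R_w0)
  finally show ?thesis .
qed

lemma walk_restart_fail_le:
  assumes IH: "\<And>x pos. pos < H \<Longrightarrow>
      1 - succ_prob R err (counter_walk n H b x pos) \<le> \<Phi> x pos + \<Psi> x pos / b"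
    and "0 < b"
  shows "1 - succ_prob R err (counter_walk n H (Suc b) x 0) \<le> \<phi>\<^sub>0 + (w\<^sub>0 - 1) / b"
proof -
  have "1 - succ_prob R err (counter_walk n H (Suc b) x 0)
      = (\<Sum>y<n. 1 - succ_prob R err (counter_walk n H b y 1)) / real n"
    using n_pos by (simp add: succ_prob_Rand max_def sum_subtractf field_simps)
  also have "\<dots> \<le> (\<Sum>y<n. \<Phi> y 1 + \<Psi> y 1 / b) / real n"
    using IH H_ge_2 by (intro divide_right_mono sum_mono) auto
  also have "\<dots> = ((\<Sum>y<n. \<Phi> y 1) + (\<Sum>y<n. \<Psi> y 1) / b) / real n"
    by (simp add: sum.distrib sum_divide_distrib)
  also have "\<dots> \<le> (real n * \<phi>\<^sub>0 + real n * (w\<^sub>0 - 1) / b) / real n"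
    using sum_Phi_restart sum_Psi_restart \<open>0 < b\<close>
    by (intro divide_right_mono add_mono) auto
  also have "\<dots> = \<phi>\<^sub>0 + (w\<^sub>0 - 1) / b"
    using n_pos by (simp add: field_simps)
  finally show ?thesis .
qed

lemma walk_query_fail_le:
  assumes IH: "\<And>x pos. pos < H \<Longrightarrow>
      1 - succ_prob R err (counter_walk n H b x pos) \<le> \<Phi> x pos + \<Psi> x pos / b"
    and "0 < b" "0 < pos" "pos < H"
  shows "1 - succ_prob R err (counter_walk n H (Suc b) x pos) \<le> \<Phi> x pos + (\<Psi> x pos - 1) / b"
proof -
  define g where "g yes = (if yes \<and> Suc pos = H then Ret x
      else counter_walk n H b x (if yes then Suc pos else pos - 1))" for yes
  have fail_g: "1 - succ_prob R err (g yes)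
      \<le> \<Phi> x (if yes then Suc pos else pos - 1) + \<Psi> x (if yes then Suc pos else pos - 1) / b"
    for yes
  proof (cases "yes \<and> Suc pos = H")
    case True
    have "0 \<le> \<Psi> x H / b"
      using Psi_nonneg by simp
    then show ?thesis
      using True fail_Ret_le_Phi_top[of x] by (simp add: g_def)
  next
    case False
    then show ?thesis
      using IH \<open>pos < H\<close> by (auto simp: g_def)
  qed
  have "1 - succ_prob R err (counter_walk n H (Suc b) x pos)
      = yes_prob x * (1 - succ_prob R err (g True)) + (1 - yes_prob x) * (1 - succ_prob R err (g False))"
    using \<open>0 < pos\<close> by (simp add: succ_prob_Query_yes g_def algebra_simps)
  also have "\<dots> \<le> \<Phi> x pos + (\<Psi> x pos - 1) / b"
    using yes_prob_bounds \<open>0 < b\<close> fail_g[of True] fail_g[of False]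
      Phi_step[OF \<open>0 < pos\<close> \<open>pos < H\<close>] Psi_step[OF \<open>0 < pos\<close> \<open>pos < H\<close>]
    by (intro convex_bound_step) auto
  finally show ?thesis .
qed

text \<open>The term \<open>\<Psi> x pos / b\<close> is Markov's inequality for the remaining running time: it is
  trivial unless \<open>\<Psi> x pos < b\<close>, and each step lowers the budget by one and \<open>\<Psi>\<close> by one in
  expectation.\<close>

lemma walk_fail_le:
  assumes "0 < b" "pos < H"
  shows "1 - succ_prob R err (counter_walk n H b x pos) \<le> \<Phi> x pos + \<Psi> x pos / b"
  using assms
proof (induction b arbitrary: x pos)
  case (Suc b)
  show ?case
  proof (cases "\<Psi> x pos < Suc b")
    case True
    moreover have "1 \<le> \<Psi> x pos"
      using Suc.prems by (intro Psi_ge_1)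
    ultimately have "0 < b"
      by simp
    then have "1 - succ_prob R err (counter_walk n H (Suc b) x pos) \<le> \<Phi> x pos + (\<Psi> x pos - 1) / b"
      using Suc walk_restart_fail_le[of b x] walk_query_fail_le[of b pos x]
      by (cases "pos = 0") (auto simp: Phi_0 Psi_0)
    also have "(\<Psi> x pos - 1) / b \<le> \<Psi> x pos / Suc b"
      using True \<open>0 < b\<close> by (simp add: field_simps)
    finally show ?thesis by simp
  next
    case False
    then have "1 \<le> \<Psi> x pos / Suc b"
      by simp
    then show ?thesis
      using Phi_nonneg[of x pos] succ_prob_nonneg[of R err "counter_walk n H (Suc b) x pos"]
      by linarith
  qed
qed simp

lemma phi0_le:
  assumes "H = a * t + 1" "real n \<le> real t * real (card R)" "0 < t" "\<rho>^a \<le> (1 - \<rho>) / 64"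
  shows "\<phi>\<^sub>0 \<le> 1/64"
proof -
  have "\<phi>\<^sub>0 = real n / real (card R) * (\<rho>^a)^t / (1 - \<rho>)"
    unfolding \<phi>\<^sub>0_def using assms(1) by (simp add: power_mult)
  also have "\<dots> \<le> real t * (\<rho>^a)^t / (1 - \<rho>)"
    using assms(2) card_R_pos rho_pos rho_less_1
    by (intro divide_right_mono mult_right_mono) (auto simp: field_simps)
  also have "\<dots> \<le> \<rho>^a / (1 - \<rho>)"
    using assms(3,4) rho_pos rho_less_1
    by (intro divide_right_mono of_nat_mult_power_le) auto
  also have "\<dots> \<le> 1/64"
    using assms(4) rho_less_1 by (simp add: field_simps)
  finally show ?thesis .
qed

lemma w0_le:
  assumes "H = a * t + 1" "real n \<le> real t * real (card R)" "0 < t"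
  shows "w\<^sub>0 \<le> real t * (1 + \<kappa> * (real a + 2)) / (1 - \<rho>)"
proof -
  have "w\<^sub>0 = (real n / real (card R) * (1 + \<kappa>) + \<kappa> * real H) / (1 - \<rho>)"
    using card_R_pos by (simp add: w\<^sub>0_def field_simps)
  also have "\<dots> \<le> (real t * (1 + \<kappa>) + \<kappa> * (real t * (real a + 1))) / (1 - \<rho>)"
    using assms card_R_pos kappa_ge_1 rho_less_1
    by (intro divide_right_mono add_mono mult_right_mono mult_left_mono)
       (auto simp: field_simps)
  also have "\<dots> = real t * (1 + \<kappa> * (real a + 2)) / (1 - \<rho>)"
    by (simp add: algebra_simps)
  finally show ?thesis .
qed


lemma walk_fail_le_1_32:
  assumes "H = a * t + 1" "real n \<le> real t * real (card R)" "0 < t"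
    and "\<rho>^a \<le> (1 - \<rho>) / 64" "64 * ((1 + \<kappa> * (real a + 2)) / (1 - \<rho>)) \<le> real b"
  shows "1 - succ_prob R err (counter_walk n H (b * t) 0 0) \<le> 1/32"
proof -
  define K where "K = (1 + \<kappa> * (real a + 2)) / (1 - \<rho>)"
  have K: "0 < K" "64 * K \<le> real b"
    using assms(5) kappa_ge_1 rho_less_1 by (simp_all add: K_def add_pos_nonneg)
  then have "0 < b * t"
    using assms(3) by simp
  then have "1 - succ_prob R err (counter_walk n H (b * t) 0 0) \<le> \<phi>\<^sub>0 + w\<^sub>0 / real (b * t)"
    using walk_fail_le[of "b * t" 0 0] H_ge_2 by (simp add: Phi_0 Psi_0)
  also have "w\<^sub>0 / real (b * t) \<le> (real t * K) / (64 * K * real t)"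
  proof (rule frac_le)
    show "w\<^sub>0 \<le> real t * K"
      using w0_le[OF assms(1-3)] by (simp add: K_def)
    show "64 * K * real t \<le> real (b * t)"
      using K by (simp add: mult_right_mono)
  qed (use K assms(3) in auto)
  finally show ?thesis
    using phi0_le[OF assms(1-4)] K assms(3) by simp
qed
end

lemma nat_ceiling_divide_bounds:
  assumes "0 < k" "k \<le> n"
  shows "0 < nat \<lceil>real n / real k\<rceil>" "real n \<le> real (nat \<lceil>real n / real k\<rceil>) * real k"
proof -
  have "real n = real n / real k * real k"
    using assms(1) by simp
  also have "\<dots> \<le> real (nat \<lceil>real n / real k\<rceil>) * real k"
    by (intro mult_right_mono real_nat_ceiling_ge) auto
  finally show "real n \<le> real (nat \<lceil>real n / real k\<rceil>) * real k" .
  show "0 < nat \<lceil>real n / real k\<rceil>"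
    using assms by simp
qed

definition sample_walk :: "nat \<Rightarrow> nat \<Rightarrow> nat \<Rightarrow> nat \<Rightarrow> alg" where
  "sample_walk a b k n =
     counter_walk n (a * nat \<lceil>real n / real k\<rceil> + 1) (b * nat \<lceil>real n / real k\<rceil>) 0 0"

lemma time_sample_walk: "time (sample_walk a b k n) \<le> b * nat \<lceil>real n / real k\<rceil>"
  by (simp add: sample_walk_def time_counter_walk)

lemma (in noise_bound) exists_good_sample_walk:
  "\<exists>a b. 0 < b \<and> (\<forall>n R err. R \<subseteq> {..<n} \<longrightarrow> R \<noteq> {} \<longrightarrow> valid_noise p err \<longrightarrow>
      1 - succ_prob R err (sample_walk a b (card R) n) \<le> 1/32)"
proof -
  obtain a0 where a0: "\<rho>^a0 < (1 - \<rho>) / 64"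
    using real_arch_pow_inv[of "(1 - \<rho>) / 64" \<rho>] rho_less_1 by auto
  define a where "a = Suc a0"
  have "\<rho>^a \<le> \<rho>^a0"
    using rho_pos rho_less_1 by (simp add: a_def mult_left_le_one_le)
  with a0 have a: "\<rho>^a \<le> (1 - \<rho>) / 64"
    by simp
  define b where "b = nat \<lceil>64 * ((1 + \<kappa> * (real a + 2)) / (1 - \<rho>))\<rceil>"
  have "1 - succ_prob R err (sample_walk a b (card R) n) \<le> 1/32"
    if R: "R \<subseteq> {..<n}" "R \<noteq> {}" and noise: "valid_noise p err" for n R err
  proof -
    define t where "t = nat \<lceil>real n / real (card R)\<rceil>"
    have "0 < card R" "card R \<le> n"
      using R finite_subset card_mono[OF finite_lessThan R(1)] by (auto simp: card_gt_0_iff)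
    then have t: "0 < t" "real n \<le> real t * real (card R)"
      unfolding t_def by (rule nat_ceiling_divide_bounds)+
    interpret W: counter_walk_analysis p n "a * t + 1" R err
      using R noise t by unfold_locales (auto simp: a_def)
    show ?thesis
      unfolding sample_walk_def t_def[symmetric]
      by (rule W.walk_fail_le_1_32[OF refl t(2,1) a]) (unfold b_def, rule real_nat_ceiling_ge)
  qed
  moreover have "0 < b"
    using kappa_ge_1 rho_less_1 by (simp add: b_def add_pos_nonneg)
  ultimately show ?thesis
    by blast
qed

section \<open>Amplification\<close>

definition irrelevant_count :: "nat set \<Rightarrow> nat list \<Rightarrow> nat" where
  "irrelevant_count R ys = length (filter (\<lambda>x. x \<notin> R) ys)"

text \<open>The last term is at least \<open>1\<close> unless at least three quarters of \<open>ys\<close> are relevant.\<close>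

lemma succ_prob_relabel_majority:
  fixes c p :: real and A :: "nat \<Rightarrow> alg"
  assumes A_correct: "\<And>N R err. R \<subseteq> {..<N} \<Longrightarrow> real (card R) \<ge> 3/4 * real N \<Longrightarrow>
      valid_noise p err \<Longrightarrow> succ_prob R err (A N) \<ge> 1 - c powr (- real N)"
    and "0 \<le> p" "valid_noise p err" "length ys = M"
  shows "succ_prob R err (relabel ys (A M))
    \<ge> 1 - c powr (- real M) - 16 ^ irrelevant_count R ys / 2 ^ M"
proof (cases "4 * irrelevant_count R ys \<le> M")
  case True
  define R' where "R' = {i. i < length ys \<and> ys ! i \<in> R}"
  define err' where "err' = (\<lambda>i. if i < length ys then err (ys ! i) else 0)"
  have "card R' + irrelevant_count R ys = M"
    using sum_length_filter_compl[of "\<lambda>x. x \<in> R" ys] assms(4)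
    by (simp add: R'_def irrelevant_count_def length_filter_conv_card)
  then have "succ_prob R' err' (A M) \<ge> 1 - c powr (- real M)"
    using True assms(2-4)
    by (intro A_correct) (auto simp: R'_def err'_def valid_noise_def)
  moreover have "succ_prob R' err' (A M) \<le> succ_prob R err (relabel ys (A M))"
    unfolding R'_def err'_def by (rule succ_prob_relabel_ge)
  moreover have "0 \<le> 16 ^ irrelevant_count R ys / (2 ^ M :: real)"
    by simp
  ultimately show ?thesis
    by linarith
next
  case False
  have "(2::real) ^ M \<le> 16 ^ irrelevant_count R ys"
    using False power_increasing[of M "4 * irrelevant_count R ys" "2::real"]
    by (simp add: power_mult)
  then have "1 \<le> 16 ^ irrelevant_count R ys / (2 ^ M :: real)"
    by simp
  then show ?thesis
    using succ_prob_nonneg[of R err "relabel ys (A M)"] powr_ge_zero[of c "- real M"]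
    by linarith
qed

lemma expectation_ge_if_mem:
  fixes M :: "'a pmf" and f :: "'a \<Rightarrow> real"
  assumes "\<And>x. (if x \<in> R then \<alpha> else \<beta>) \<le> f x" "\<And>x. \<bar>f x\<bar> \<le> B"
  shows "\<alpha> * measure_pmf.prob M R + \<beta> * (1 - measure_pmf.prob M R) \<le> measure_pmf.expectation M f"
proof -
  have int_const: "integrable M (\<lambda>x. \<beta>)"
    by (rule measure_pmf.integrable_const_bound[where B="\<bar>\<beta>\<bar>"]) auto
  have int_ind: "integrable M (\<lambda>x. (\<alpha> - \<beta>) * indicator R x)"
    by (rule measure_pmf.integrable_const_bound[where B="\<bar>\<alpha> - \<beta>\<bar>"])
       (auto simp: abs_mult indicator_def)
  have "measure_pmf.expectation M (\<lambda>x. \<beta>) = \<beta>"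
    by (simp add: measure_pmf.prob_space)
  moreover have "measure_pmf.expectation M (\<lambda>x. (\<alpha> - \<beta>) * indicator R x)
      = (\<alpha> - \<beta>) * measure_pmf.prob M R"
    by simp
  ultimately have "\<alpha> * measure_pmf.prob M R + \<beta> * (1 - measure_pmf.prob M R)
      = measure_pmf.expectation M (\<lambda>x. \<beta>) + measure_pmf.expectation M (\<lambda>x. (\<alpha> - \<beta>) * indicator R x)"
    by (simp add: algebra_simps)
  also have "\<dots> = measure_pmf.expectation M (\<lambda>x. \<beta> + (\<alpha> - \<beta>) * indicator R x)"
    by (rule Bochner_Integration.integral_add[OF int_const int_ind, symmetric])
  also have "\<dots> \<le> measure_pmf.expectation M f"
  proof (intro integral_mono Bochner_Integration.integrable_add[OF int_const int_ind])
    show "integrable M f"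
      using assms(2) by (intro measure_pmf.integrable_const_bound[where B=B]) auto
    show "\<beta> + (\<alpha> - \<beta>) * indicator R x \<le> f x" for x
      using assms(1)[of x] by (cases "x \<in> R") auto
  qed
  finally show ?thesis .
qed

text \<open>An exponential moment bound: each sample is irrelevant with probability at most \<open>1/32\<close>,
  so it multiplies \<open>16 ^ irrelevant_count\<close> by at most \<open>1 + 15/32 \<le> 3/2\<close> in expectation.\<close>

lemma succ_prob_collect_samples:
  assumes T: "1 - succ_prob R err T \<le> 1/32"
    and F: "\<And>ys. length ys = M \<Longrightarrow> succ_prob R err (F ys) \<ge> 1 - \<gamma> - 16 ^ irrelevant_count R ys / 2 ^ M"
    and "length xs + j = M"
  shows "succ_prob R err (collect_samples T F j xs)
    \<ge> 1 - \<gamma> - 16 ^ irrelevant_count R xs * (3/2) ^ j / 2 ^ M"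
  using assms(3)
proof (induction j arbitrary: xs)
  case (Suc j)
  define Z where "Z = 16 ^ irrelevant_count R xs * (3/2) ^ j / (2 ^ M :: real)"
  let ?P = "measure_pmf.prob (run R err T) R"
  have step: "(if x \<in> R then 1 - \<gamma> - Z else 1 - \<gamma> - 16 * Z)
      \<le> succ_prob R err (collect_samples T F j (xs @ [x]))" for x
    using Suc.IH[of "xs @ [x]"] Suc.prems
    by (cases "x \<in> R") (simp_all add: irrelevant_count_def Z_def)
  have Z: "0 \<le> Z"
    by (simp add: Z_def)
  have "(1 - \<gamma> - Z) * ?P + (1 - \<gamma> - 16 * Z) * (1 - ?P)
      \<le> succ_prob R err (collect_samples T F (Suc j) xs)"
    unfolding collect_samples.simps succ_prob_alg_bind
    by (rule expectation_ge_if_mem[where B=1, OF step])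
       (use succ_prob_nonneg succ_prob_le_1 in \<open>auto simp: abs_le_iff\<close>)
  moreover have "(1 - \<gamma> - Z) * ?P + (1 - \<gamma> - 16 * Z) * (1 - ?P) = 1 - \<gamma> - Z - 15 * Z * (1 - ?P)"
    by (simp add: algebra_simps)
  moreover have "15 * Z * (1 - ?P) \<le> 15 * Z * (1/32)"
    using T Z by (intro mult_left_mono) (auto simp: succ_prob_def)
  moreover have "16 ^ irrelevant_count R xs * (3/2) ^ Suc j / (2 ^ M :: real) = Z * (3/2)"
    by (simp add: Z_def)
  ultimately show ?case
    using Z by linarith
qed (use F in simp)

lemma succ_prob_amplify:
  fixes c p :: real and A :: "nat \<Rightarrow> alg"
  assumes A_correct: "\<And>N R err. R \<subseteq> {..<N} \<Longrightarrow> real (card R) \<ge> 3/4 * real N \<Longrightarrow>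
      valid_noise p err \<Longrightarrow> succ_prob R err (A N) \<ge> 1 - c powr (- real N)"
    and "0 \<le> p" "valid_noise p err" "1 - succ_prob R err T \<le> 1/32"
  shows "succ_prob R err (collect_samples T (\<lambda>ys. relabel ys (A M)) M [])
    \<ge> 1 - c powr (- real M) - (4/3) powr (- real M)"
proof -
  have "succ_prob R err (collect_samples T (\<lambda>ys. relabel ys (A M)) M [])
      \<ge> 1 - c powr (- real M) - 16 ^ irrelevant_count R [] * (3/2) ^ M / 2 ^ M"
    by (rule succ_prob_collect_samples[OF assms(4)
          succ_prob_relabel_majority[OF A_correct assms(2,3)]]) simp_all
  moreover have "16 ^ irrelevant_count R [] * (3/2) ^ M / 2 ^ M = (3/4 :: real) ^ M"
    by (simp add: irrelevant_count_def power_divide[symmetric])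
  moreover have "(3/4 :: real) ^ M = (4/3) powr (- real M)"
    by (simp add: powr_minus powr_realpow power_inverse[symmetric])
  ultimately show ?thesis
    by simp
qed

section \<open>Retrieval\<close>

lemma real_nat_ceiling_le_add_one: "0 \<le> x \<Longrightarrow> real (nat \<lceil>x\<rceil>) \<le> x + 1"
  using of_int_ceiling_le_add_one[of x] by (simp add: of_nat_nat)

text \<open>Inputs with \<open>n < k\<close> do not exist; returning at once there keeps the time bound valid.\<close>

definition retrieval :: "(nat \<Rightarrow> alg) \<Rightarrow> nat \<Rightarrow> nat \<Rightarrow> nat \<Rightarrow> nat \<Rightarrow> nat \<Rightarrow> alg" where
  "retrieval A a b k M n = (if n < k then Ret 0
     else collect_samples (sample_walk a b k n) (\<lambda>ys. relabel ys (A M)) M [])"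

lemma succ_prob_retrieval:
  fixes c p :: real and A :: "nat \<Rightarrow> alg"
  assumes A_correct: "\<And>N R err. R \<subseteq> {..<N} \<Longrightarrow> real (card R) \<ge> 3/4 * real N \<Longrightarrow>
      valid_noise p err \<Longrightarrow> succ_prob R err (A N) \<ge> 1 - c powr (- real N)"
    and "0 \<le> p" "valid_noise p err" "k \<le> n"
    and "1 - succ_prob R err (sample_walk a b k n) \<le> 1/32"
    and "c powr (- real M) + (4/3) powr (- real M) \<le> 1 / real n"
  shows "succ_prob R err (retrieval A a b k M n) \<ge> 1 - 1 / real n"
  using succ_prob_amplify[OF A_correct assms(2,3,5), of M] assms(4,6)
  by (simp add: retrieval_def)

lemma time_retrieval:
  assumes "0 < k" "real M \<le> L"
  shows "real (time (retrieval A a b k M n))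
    \<le> 2 * real b * L * (real n / real k) + real (time (A M))"
proof (cases "n < k")
  case False
  define t where "t = nat \<lceil>real n / real k\<rceil>"
  have "time (retrieval A a b k M n) \<le> M * time (sample_walk a b k n) + time (A M)"
    using False by (simp add: retrieval_def time_collect_samples time_relabel_le)
  also have "\<dots> \<le> M * (b * t) + time (A M)"
    unfolding t_def by (intro add_right_mono mult_le_mono2 time_sample_walk)
  finally have "real (time (retrieval A a b k M n)) \<le> real (M * (b * t) + time (A M))"
    by (rule of_nat_mono)
  then have "real (time (retrieval A a b k M n)) \<le> real b * real t * real M + real (time (A M))"
    by (simp only: of_nat_add of_nat_mult mult.commute mult.left_commute)
  moreover have "real b * real t * real M \<le> 2 * real b * L * (real n / real k)"
  proof -
    have "1 \<le> real n / real k"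
      using False assms(1) by simp
    moreover have "real t \<le> real n / real k + 1"
      unfolding t_def by (rule real_nat_ceiling_le_add_one) simp
    ultimately have "real b * real t \<le> real b * (2 * (real n / real k))"
      by (intro mult_left_mono) simp_all
    from this assms(2) have "real b * real t * real M \<le> real b * (2 * (real n / real k)) * L"
      by (rule mult_mono) simp_all
    then show ?thesis
      by (simp add: algebra_simps)
  qed
  ultimately show ?thesis
    by linarith
next
  case True
  have "0 \<le> L"
    using assms(2) of_nat_0_le_iff order_trans by blast
  then show ?thesis
    using True by (simp add: retrieval_def)
qed

lemma powr_neg_le_half_inverse:
  fixes base :: real
  assumes "1 < base" "2 * ln (real n) \<le> real M * ln base" "2 \<le> n"
  shows "base powr (- real M) \<le> 1 / (2 * real n)"
proof -
  have "base powr (- real M) = exp (- (real M * ln base))"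
    using assms(1) by (simp add: powr_def)
  also have "\<dots> \<le> exp (- (2 * ln (real n)))"
    using assms(2) by simp
  also have "\<dots> = 1 / (exp (ln (real n)) * exp (ln (real n)))"
    by (simp only: exp_minus mult_2 exp_add inverse_eq_divide)
  also have "\<dots> = 1 / (real n * real n)"
    using assms(3) by simp
  also have "\<dots> \<le> 1 / (2 * real n)"
    using assms(3) by (intro divide_left_mono mult_right_mono) auto
  finally show ?thesis .
qed

lemma log_sample_size:
  fixes c :: real
  assumes "1 < c"
  obtains c\<^sub>1 c\<^sub>2 :: real and m :: "nat \<Rightarrow> nat" where "0 < c\<^sub>1" "0 < c\<^sub>2"
    "\<And>n. 2 \<le> n \<Longrightarrow> c\<^sub>1 * ln (real n) \<le> real (m n) \<and> real (m n) \<le> c\<^sub>2 * ln (real n) \<and>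
        c powr (- real (m n)) + (4/3) powr (- real (m n)) \<le> 1 / real n"
proof
  define L where "L = min (ln (4/3)) (ln c)"
  have L: "0 < L" "L \<le> ln (4/3)" "L \<le> ln c"
    using assms by (auto simp: L_def)
  show "0 < 2 / L" "0 < 2 / L + 1 / ln 2"
    using L by (auto intro: add_pos_pos)
  fix n :: nat
  assume n: "2 \<le> n"
  define M where "M = nat \<lceil>2 / L * ln (real n)\<rceil>"
  have ln_n: "ln 2 \<le> ln (real n)" "0 \<le> ln (real n)"
    using n by simp_all
  have lower: "2 / L * ln (real n) \<le> real M"
    unfolding M_def by (rule real_nat_ceiling_ge)
  then have "2 * ln (real n) \<le> real M * L"
    using L by (simp add: field_simps)
  then have "2 * ln (real n) \<le> real M * ln base" if "L \<le> ln base" for base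
    using mult_left_mono[OF that, of "real M"] by simp
  then have "c powr (- real M) + (4/3) powr (- real M) \<le> 1 / (2 * real n) + 1 / (2 * real n)"
    using L assms n by (intro add_mono powr_neg_le_half_inverse) auto
  moreover have "real M \<le> (2 / L + 1 / ln 2) * ln (real n)"
  proof -
    have "real M \<le> 2 / L * ln (real n) + 1"
      unfolding M_def using L ln_n by (intro real_nat_ceiling_le_add_one) simp
    also have "1 \<le> ln (real n) / ln 2"
      using ln_n by simp
    finally show ?thesis
      by (simp add: algebra_simps)
  qed
  ultimately show "2 / L * ln (real n) \<le> real M \<and> real M \<le> (2 / L + 1 / ln 2) * ln (real n) \<and>
      c powr (- real M) + (4/3) powr (- real M) \<le> 1 / real n"
    using lower by simp
qed

theorem lemma7:
  fixes p c :: real and A :: "nat \<Rightarrow> alg"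
  assumes p: "0 \<le> p" "p < 1/2"
    and c: "c > 1"
    and A_correct: "\<And>N R err. R \<subseteq> {..<N} \<Longrightarrow> real (card R) \<ge> 3/4 * real N \<Longrightarrow>
         valid_noise p err \<Longrightarrow> succ_prob R err (A N) \<ge> 1 - c powr (- real N)"
  shows "\<exists>C c1 c2 :: real. C > 0 \<and> c1 > 0 \<and> c2 > 0 \<and>
    (\<forall>k::nat. k \<ge> 1 \<longrightarrow> (\<exists>(B :: nat \<Rightarrow> alg) (m :: nat \<Rightarrow> nat).
       (\<forall>n R err. k \<le> n \<longrightarrow> R \<subseteq> {..<n} \<longrightarrow> card R = k \<longrightarrow> valid_noise p err \<longrightarrow>
            succ_prob R err (B n) \<ge> 1 - 1 / real n)
     \<and> (\<forall>n. n \<ge> 2 \<longrightarrow>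
            c1 * ln (real n) \<le> real (m n) \<and> real (m n) \<le> c2 * ln (real n) \<and>
            real (time (B n)) \<le> C * (real n / real k) * ln (real n) + real (time (A (m n))))))"
proof -
  interpret noise_bound p
    using p by unfold_locales
  obtain a b where b: "0 < b" and walk: "\<And>n R err. R \<subseteq> {..<n} \<Longrightarrow> R \<noteq> {} \<Longrightarrow>
      valid_noise p err \<Longrightarrow> 1 - succ_prob R err (sample_walk a b (card R) n) \<le> 1/32"
    using exists_good_sample_walk by blast
  obtain c\<^sub>1 c\<^sub>2 m where c\<^sub>1: "0 < c\<^sub>1" and c\<^sub>2: "0 < c\<^sub>2" and m: "\<And>n. 2 \<le> n \<Longrightarrow>
      c\<^sub>1 * ln (real n) \<le> real (m n) \<and> real (m n) \<le> c\<^sub>2 * ln (real n) \<and>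
      c powr (- real (m n)) + (4/3) powr (- real (m n)) \<le> 1 / real n"
    using log_sample_size[OF c] by blast
  have success: "succ_prob R err (retrieval A a b k (m n) n) \<ge> 1 - 1 / real n"
    if "k \<le> n" "R \<subseteq> {..<n}" "card R = k" "1 \<le> k" "valid_noise p err" for k n R err
  proof (cases "n = 1")
    case False
    moreover have "R \<noteq> {}"
      using that by auto
    ultimately show ?thesis
      using that walk[of R n err] m[of n] by (intro succ_prob_retrieval[OF A_correct p(1)]) auto
  qed (simp add: succ_prob_nonneg)
  have time: "real (time (retrieval A a b k (m n) n))
      \<le> 2 * real b * c\<^sub>2 * (real n / real k) * ln (real n) + real (time (A (m n)))"
    if "1 \<le> k" "2 \<le> n" for k n
    using time_retrieval[of k "m n" "c\<^sub>2 * ln (real n)" A a b n] m[OF that(2)] that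
    by (simp add: ac_simps)
  show ?thesis
    apply (rule exI[of _ "2 * real b * c\<^sub>2"], rule exI[of _ c\<^sub>1], rule exI[of _ c\<^sub>2])
    apply (intro conjI allI impI)
    subgoal using b c\<^sub>2 by simp
    subgoal by (rule c\<^sub>1)
    subgoal by (rule c\<^sub>2)
    subgoal for k
      by (intro exI[of _ "\<lambda>n. retrieval A a b k (m n) n"] exI[of _ m] conjI allI impI)
         (simp_all only: success time m)
    done
qed

end
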